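(* Let $f_k:(0,\infty)\to[0,\infty)$, $k=1,\dots,r$, and real numbers $a_0<a_1$ satisfy $[a_0,a_1]\subset\bigcap_{k=1}^rD(M_{f_k})$. For $a\in[a_0,a_1]$ let $X_1,\dots,X_r$ be independent with $X_k\sim m_{f_k}(a)$, and let $\mathbb{E}^a$, $\mathrm{Cov}^a$ denote expectation and covariance under the corresponding product measure. Let $S=\sum_{k=1}^r\log X_k$ and let $A:\mathbb{R}^r\to\mathbb{R}$ be measurable with $\mathbb{E}^a[A(X_1,\dots,X_r)^2]<\infty$ for all $a\in[a_0,a_1]$. Then \[ \frac{\partial}{\partial a}\mathbb{E}^a[A(X_1,\dots,X_r)]=\mathrm{Cov}^a\big(A(X_1,\dots,X_r),S\big)\quad\text{for all }a\in(a_0,a_1), \] and the map $(a_0,a_1)\ni a\mapsto\frac{\partial}{\partial a}\mathbb{E}^a[A(X_1,\dots,X_r)]$ is continuous.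
   Context: Mellin framework: for $f:(0,\infty)\to[0,\infty)$, $M_f(a)=\int_0^\infty x^{a-1}f(x)\,dx$; $D(M_f)$ is the interior of $\{a\in\mathbb{R}:0<M_f(a)<\infty\}$; for $a\in D(M_f)$, $X\sim m_f(a)$ means $X$ has density $M_f(a)^{-1}x^{a-1}f(x)$ on $(0,\infty)$. *)

theory Defs
  imports "HOL-Probability.Probability"
begin

definition mellin :: "(real \<Rightarrow> real) \<Rightarrow> real \<Rightarrow> ennreal" where
  "mellin f a = (\<integral>\<^sup>+ x. ennreal (indicator {0<..} x * (x powr (a - 1) * f x)) \<partial>lborel)"

definition mellin_dom :: "(real \<Rightarrow> real) \<Rightarrow> real set" where
  "mellin_dom f = interior {a. 0 < mellin f a \<and> mellin f a < \<infinity>}"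

definition mellin_dist :: "(real \<Rightarrow> real) \<Rightarrow> real \<Rightarrow> real measure" where
  "mellin_dist f a = density lborel
     (\<lambda>x. ennreal (indicator {0<..} x * (x powr (a - 1) * f x) / enn2real (mellin f a)))"

text \<open>Joint law of independent X_1..X_r with X_k ~ m_{f_k}(a): the product measure.\<close>
definition mellin_prod :: "nat \<Rightarrow> (nat \<Rightarrow> real \<Rightarrow> real) \<Rightarrow> real \<Rightarrow> (nat \<Rightarrow> real) measure" where
  "mellin_prod r f a = PiM {1..r} (\<lambda>k. mellin_dist (f k) a)"

definition covariance :: "'a measure \<Rightarrow> ('a \<Rightarrow> real) \<Rightarrow> ('a \<Rightarrow> real) \<Rightarrow> real" where
  "covariance M U V =
     (\<integral>x. (U x - (\<integral>y. U y \<partial>M)) * (V x - (\<integral>y. V y \<partial>M)) \<partial>M)"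

end

theory Submission
  imports Defs
begin

(*
  Since the Mellin densities satisfy x^(a-1) f(x) = x^(a0-1) f(x) exp((a - a0) ln x), the law at a
  is the law at a0 tilted by exp((a - a0) S), up to normalisation. Hence E^a[g] = T g a / T 1 a with
  T g a = E^a0[g exp((a - a0) S)]. Since |s| exp(t s) <= (exp(c s) + exp(d s)) / delta whenever
  [t - delta, t + delta] is inside [c, d], integrability of g at the endpoints c, d dominates the
  difference quotients at interior points, so T g is differentiable with derivative T (g S). The
  quotient rule then gives d/da E^a[A] = E^a[A S] - E^a[A] E^a[S] = Cov^a(A, S), and applying the
  same formula to A S and S shows that each of these three expectations is continuous in a.
*)

lemma exp_mult_le_exp_mult_add_exp_mult:
  fixes a b t s :: real
  assumes "a \<le> t" "t \<le> b"
  shows "exp (t * s) \<le> exp (a * s) + exp (b * s)"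
proof -
  have "t * s \<le> a * s \<or> t * s \<le> b * s"
    using assms by (cases "0 \<le> s") (auto intro: mult_right_mono mult_right_mono_neg)
  then show ?thesis
    by (smt (verit) exp_gt_zero exp_le_cancel_iff)
qed

lemma abs_mult_exp_le:
  fixes a b t s d :: real
  assumes "0 < d" "a \<le> t - d" "t + d \<le> b"
  shows "\<bar>s\<bar> * exp (t * s) \<le> (exp (a * s) + exp (b * s)) / d"
proof -
  have "d * \<bar>s\<bar> \<le> exp (d * \<bar>s\<bar>)"
    using exp_ge_add_one_self[of "d * \<bar>s\<bar>"] by linarith
  then have "\<bar>s\<bar> * exp (t * s) \<le> exp (d * \<bar>s\<bar>) / d * exp (t * s)"
    using assms(1) by (intro mult_right_mono) (simp_all add: field_simps)
  also have "\<dots> = exp ((if 0 \<le> s then t + d else t - d) * s) / d"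
    by (auto simp: exp_add[symmetric] algebra_simps)
  also have "\<dots> \<le> (exp (a * s) + exp (b * s)) / d"
    using assms by (intro divide_right_mono exp_mult_le_exp_mult_add_exp_mult) auto
  finally show ?thesis .
qed

lemma abs_exp_mult_diff_le:
  fixes a b c h s d :: real
  assumes "0 < d" "\<bar>h\<bar> \<le> d" "a \<le> c - 2 * d" "c + 2 * d \<le> b"
  shows "\<bar>exp ((c + h) * s) - exp (c * s)\<bar> \<le> (exp (a * s) + exp (b * s)) / d * \<bar>h\<bar>"
proof -
  have "norm (exp ((c + h) * s) - exp (c * s)) \<le> (exp (a * s) + exp (b * s)) / d * norm (c + h - c)"
  proof (rule field_differentiable_bound[of "{c - d..c + d}"])
    show "((\<lambda>t. exp (t * s)) has_field_derivative s * exp (t * s)) (at t within {c - d..c + d})" for t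
      by (auto intro!: derivative_eq_intros)
    show "norm (s * exp (t * s)) \<le> (exp (a * s) + exp (b * s)) / d" if "t \<in> {c - d..c + d}" for t
      using that assms abs_mult_exp_le[of d a t b s] by (simp add: abs_mult)
  qed (use assms in auto)
  then show ?thesis by simp
qed

lemma integral_dominated_convergence_within:
  fixes s :: "real \<Rightarrow> 'a \<Rightarrow> real" and f w :: "'a \<Rightarrow> real"
  assumes "f \<in> borel_measurable M" "\<And>t. t \<in> U \<Longrightarrow> s t \<in> borel_measurable M" "integrable M w"
    and "\<And>x. x \<in> space M \<Longrightarrow> ((\<lambda>t. s t x) \<longlongrightarrow> f x) (at t0 within U)"
    and "\<And>t x. t \<in> U \<Longrightarrow> x \<in> space M \<Longrightarrow> \<bar>s t x\<bar> \<le> w x"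
  shows "((\<lambda>t. \<integral>x. s t x \<partial>M) \<longlongrightarrow> (\<integral>x. f x \<partial>M)) (at t0 within U)"
proof (subst tendsto_at_iff_sequentially, intro allI impI)
  fix X :: "nat \<Rightarrow> real"
  assume X: "\<forall>i. X i \<in> U - {t0}" "X \<longlonglongrightarrow> t0"
  have "(\<lambda>i. s (X i) x) \<longlonglongrightarrow> f x" if "x \<in> space M" for x
    using assms(4)[OF that] X by (auto simp: tendsto_at_iff_sequentially comp_def)
  then show "((\<lambda>t. \<integral>x. s t x \<partial>M) \<circ> X) \<longlonglongrightarrow> (\<integral>x. f x \<partial>M)"
    unfolding comp_def using X assms
    by (intro integral_dominated_convergence[where w=w] AE_I2) auto
qed

context
  fixes M :: "'a measure" and w S :: "'a \<Rightarrow> real" and a b :: real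
  assumes w_measurable [measurable]: "w \<in> borel_measurable M"
    and S_measurable [measurable]: "S \<in> borel_measurable M"
    and integrable_at_a: "integrable M (\<lambda>x. \<bar>w x\<bar> * exp (a * S x))"
    and integrable_at_b: "integrable M (\<lambda>x. \<bar>w x\<bar> * exp (b * S x))"
begin

lemma integrable_abs_mult_exp_between:
  assumes "a \<le> t" "t \<le> b"
  shows "integrable M (\<lambda>x. \<bar>w x\<bar> * exp (t * S x))"
proof (rule Bochner_Integration.integrable_bound[OF Bochner_Integration.integrable_add[OF integrable_at_a integrable_at_b]])
  show "AE x in M. norm (\<bar>w x\<bar> * exp (t * S x)) \<le> norm (\<bar>w x\<bar> * exp (a * S x) + \<bar>w x\<bar> * exp (b * S x))"
  proof (rule AE_I2)
    fix x
    have "\<bar>w x\<bar> * exp (t * S x) \<le> \<bar>w x\<bar> * (exp (a * S x) + exp (b * S x))"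
      using assms by (intro mult_left_mono exp_mult_le_exp_mult_add_exp_mult) auto
    then show "norm (\<bar>w x\<bar> * exp (t * S x)) \<le> norm (\<bar>w x\<bar> * exp (a * S x) + \<bar>w x\<bar> * exp (b * S x))"
      by (simp add: distrib_left)
  qed
qed measurable

lemma integrable_mult_exp_between:
  assumes "a \<le> t" "t \<le> b"
  shows "integrable M (\<lambda>x. w x * exp (t * S x))"
  using integrable_abs_mult_exp_between[OF assms]
  by (subst integrable_abs_iff[symmetric]) (auto simp: abs_mult)

lemma integrable_abs_mult_mult_exp:
  assumes "a < t" "t < b"
  shows "integrable M (\<lambda>x. \<bar>w x * S x\<bar> * exp (t * S x))"
proof -
  define d where "d = min (t - a) (b - t)"
  have d: "0 < d" "a \<le> t - d" "t + d \<le> b"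
    using assms by (auto simp: d_def)
  show ?thesis
  proof (rule Bochner_Integration.integrable_bound
      [OF integrable_divide[OF Bochner_Integration.integrable_add[OF integrable_at_a integrable_at_b], of d]])
    show "AE x in M. norm (\<bar>w x * S x\<bar> * exp (t * S x))
        \<le> norm ((\<bar>w x\<bar> * exp (a * S x) + \<bar>w x\<bar> * exp (b * S x)) / d)"
      using d mult_left_mono[OF abs_mult_exp_le[OF d], of "\<bar>w _\<bar>"]
      by (intro AE_I2) (simp add: abs_mult distrib_left add_divide_distrib mult.assoc)
  qed measurable
qed

lemma tendsto_integral_exp_difference_quotient:
  assumes "a < c" "c < b"
  shows "((\<lambda>h. \<integral>x. w x * ((exp ((c + h) * S x) - exp (c * S x)) / h) \<partial>M) \<longlongrightarrow>
      (\<integral>x. w x * S x * exp (c * S x) \<partial>M)) (at 0)"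
proof -
  define d where "d = min (c - a) (b - c) / 2"
  have d: "0 < d" "a \<le> c - 2 * d" "c + 2 * d \<le> b"
    using assms by (auto simp: d_def)
  define B where "B x = (\<bar>w x\<bar> * exp (a * S x) + \<bar>w x\<bar> * exp (b * S x)) / d" for x
  have "((\<lambda>h. \<integral>x. w x * ((exp ((c + h) * S x) - exp (c * S x)) / h) \<partial>M) \<longlongrightarrow>
      (\<integral>x. w x * S x * exp (c * S x) \<partial>M)) (at 0 within {-d<..<d})"
  proof (rule integral_dominated_convergence_within[where w = B])
    show "integrable M B"
      unfolding B_def by (intro integrable_divide Bochner_Integration.integrable_add integrable_at_a integrable_at_b)
    show "((\<lambda>h. w x * ((exp ((c + h) * S x) - exp (c * S x)) / h)) \<longlongrightarrow> w x * S x * exp (c * S x))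
        (at 0 within {-d<..<d})" for x
    proof -
      have "((\<lambda>t. exp (t * S x)) has_real_derivative exp (c * S x) * S x) (at c)"
        by (auto intro!: derivative_eq_intros)
      then have "((\<lambda>h. (exp ((c + h) * S x) - exp (c * S x)) / h) \<longlongrightarrow> exp (c * S x) * S x) (at 0)"
        unfolding DERIV_def .
      then have "((\<lambda>h. w x * ((exp ((c + h) * S x) - exp (c * S x)) / h))
          \<longlongrightarrow> w x * (exp (c * S x) * S x)) (at 0)"
        by (rule tendsto_mult_left)
      then show ?thesis
        by (auto intro: tendsto_within_subset simp: ac_simps)
    qed
    show "\<bar>w x * ((exp ((c + h) * S x) - exp (c * S x)) / h)\<bar> \<le> B x" if "h \<in> {-d<..<d}" for h x
    proof -
      have "\<bar>exp ((c + h) * S x) - exp (c * S x)\<bar> / \<bar>h\<bar> \<le> (exp (a * S x) + exp (b * S x)) / d"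
        using abs_exp_mult_diff_le[OF d(1) _ d(2,3), of h "S x"] that d(1)
        by (cases "h = 0") (auto simp: divide_le_eq)
      then have "\<bar>w x\<bar> * (\<bar>exp ((c + h) * S x) - exp (c * S x)\<bar> / \<bar>h\<bar>)
          \<le> \<bar>w x\<bar> * ((exp (a * S x) + exp (b * S x)) / d)"
        by (rule mult_left_mono) simp
      then show ?thesis
        unfolding B_def by (simp add: abs_mult distrib_left add_divide_distrib)
    qed
  qed measurable
  moreover have "0 \<in> {-d<..<d}"
    using d by simp
  ultimately show ?thesis
    using at_within_open[of 0 "{-d<..<d}"] by simp
qed

lemma has_real_derivative_integral_mult_exp:
  assumes "a < c" "c < b"
  shows "((\<lambda>t. \<integral>x. w x * exp (t * S x) \<partial>M) has_real_derivative
           (\<integral>x. w x * S x * exp (c * S x) \<partial>M)) (at c)"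
proof -
  have "\<forall>\<^sub>F h in at 0. (\<integral>x. w x * ((exp ((c + h) * S x) - exp (c * S x)) / h) \<partial>M) =
      ((\<integral>x. w x * exp ((c + h) * S x) \<partial>M) - (\<integral>x. w x * exp (c * S x) \<partial>M)) / h"
  proof (rule eventually_mono)
    show "\<forall>\<^sub>F h in at 0. h \<in> {a - c<..<b - c}"
      using assms by (intro eventually_at_in_open') auto
    fix h assume "h \<in> {a - c<..<b - c}"
    then show "(\<integral>x. w x * ((exp ((c + h) * S x) - exp (c * S x)) / h) \<partial>M) =
        ((\<integral>x. w x * exp ((c + h) * S x) \<partial>M) - (\<integral>x. w x * exp (c * S x) \<partial>M)) / h"
      using integrable_mult_exp_between[of "c + h"] integrable_mult_exp_between[of c] assms
      by (subst Bochner_Integration.integral_diff[symmetric]) (auto simp: right_diff_distrib)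
  qed
  from tendsto_cong[OF this] show ?thesis
    unfolding DERIV_def using tendsto_integral_exp_difference_quotient[OF assms] by simp
qed

end

lemma (in prob_space) covariance_eq:
  fixes U V :: "'a \<Rightarrow> real"
  assumes "integrable M U" "integrable M V" "integrable M (\<lambda>x. U x * V x)"
  shows "covariance M U V = expectation (\<lambda>x. U x * V x) - expectation U * expectation V"
proof -
  have "covariance M U V = expectation (\<lambda>x. U x * V x - expectation V * U x
      - (expectation U * V x - expectation U * expectation V))"
    unfolding covariance_def by (intro Bochner_Integration.integral_cong) (auto simp: algebra_simps)
  also have "\<dots> = expectation (\<lambda>x. U x * V x) - expectation U * expectation V"
    using assms by (simp add: prob_space)
  finally show ?thesis .
qed

lemma density_PiM_prod:
  fixes M :: "'i \<Rightarrow> 'b measure"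
  assumes "finite I" and "\<And>i. prob_space (M i)"
    and h [measurable]: "\<And>i. h i \<in> borel_measurable (M i)"
    and "\<And>i. prob_space (density (M i) (h i))"
  shows "density (PiM I M) (\<lambda>x. \<Prod>i\<in>I. h i (x i)) = PiM I (\<lambda>i. density (M i) (h i))"
proof -
  interpret D: product_sigma_finite "\<lambda>i. density (M i) (h i)"
    using assms by (auto simp: product_sigma_finite_def intro: prob_space_imp_sigma_finite)
  interpret M: product_sigma_finite M
    using assms by (auto simp: product_sigma_finite_def intro: prob_space_imp_sigma_finite)
  have prod_measurable: "(\<lambda>x. \<Prod>i\<in>I. h i (x i)) \<in> borel_measurable (PiM I M)"
    by (intro borel_measurable_prod_ennreal
        measurable_comp[OF measurable_component_singleton, unfolded comp_def] h) auto
  show ?thesis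
  proof (rule D.PiM_eqI[OF \<open>finite I\<close>])
    show "sets (density (PiM I M) (\<lambda>x. \<Prod>i\<in>I. h i (x i))) = sets (PiM I (\<lambda>i. density (M i) (h i)))"
      unfolding sets_density by (rule sets_PiM_cong) auto
    fix A assume "\<And>i. i \<in> I \<Longrightarrow> A i \<in> sets (density (M i) (h i))"
    then have A: "\<And>i. i \<in> I \<Longrightarrow> A i \<in> sets (M i)"
      by simp
    have "emeasure (density (PiM I M) (\<lambda>x. \<Prod>i\<in>I. h i (x i))) (Pi\<^sub>E I A) =
        (\<integral>\<^sup>+ x. (\<Prod>i\<in>I. h i (x i)) * indicator (Pi\<^sub>E I A) x \<partial>PiM I M)"
      using A \<open>finite I\<close> by (intro emeasure_density prod_measurable sets_PiM_I_finite)
    also have "\<dots> = (\<integral>\<^sup>+ x. (\<Prod>i\<in>I. h i (x i) * indicator (A i) (x i)) \<partial>PiM I M)"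
    proof (rule nn_integral_cong)
      fix x assume "x \<in> space (PiM I M)"
      then have "x \<in> Pi\<^sub>E I A \<longleftrightarrow> (\<forall>i\<in>I. x i \<in> A i)"
        by (auto simp: space_PiM PiE_def)
      then show "(\<Prod>i\<in>I. h i (x i)) * indicator (Pi\<^sub>E I A) x = (\<Prod>i\<in>I. h i (x i) * indicator (A i) (x i))"
        using \<open>finite I\<close> by (auto simp: prod.distrib indicator_def)
    qed
    also have "\<dots> = (\<Prod>i\<in>I. \<integral>\<^sup>+ y. h i y * indicator (A i) y \<partial>M i)"
      using A by (intro M.product_nn_integral_prod \<open>finite I\<close>) auto
    also have "\<dots> = (\<Prod>i\<in>I. emeasure (density (M i) (h i)) (A i))"
      using A by (intro prod.cong refl emeasure_density[symmetric]) auto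
    finally show "emeasure (density (PiM I M) (\<lambda>x. \<Prod>i\<in>I. h i (x i))) (Pi\<^sub>E I A) =
        (\<Prod>i\<in>I. emeasure (density (M i) (h i)) (A i))" .
  qed
qed

lemma PiM_density:
  fixes M :: "'i \<Rightarrow> 'b measure"
  assumes "finite I" and "\<And>i. i \<in> I \<Longrightarrow> prob_space (M i)"
    and "\<And>i. i \<in> I \<Longrightarrow> h i \<in> borel_measurable (M i)"
    and "\<And>i. i \<in> I \<Longrightarrow> prob_space (density (M i) (h i))"
  shows "PiM I (\<lambda>i. density (M i) (h i)) = density (PiM I M) (\<lambda>x. \<Prod>i\<in>I. h i (x i))"
proof -
  \<comment> \<open>The factors outside \<open>I\<close> do not affect \<open>PiM I\<close>; make them probability spaces.\<close>
  define M' where "M' i = (if i \<in> I then M i else return (count_space UNIV) undefined)" for i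
  define h' where "h' i = (if i \<in> I then h i else (\<lambda>_. 1))" for i
  have "density (PiM I M') (\<lambda>x. \<Prod>i\<in>I. h' i (x i)) = PiM I (\<lambda>i. density (M' i) (h' i))"
    using assms by (intro density_PiM_prod) (auto simp: M'_def h'_def density_1 intro: prob_space_return)
  moreover have "PiM I M' = PiM I M" "PiM I (\<lambda>i. density (M' i) (h' i)) = PiM I (\<lambda>i. density (M i) (h i))"
    by (auto simp: M'_def h'_def intro: PiM_cong)
  moreover have "(\<lambda>x. \<Prod>i\<in>I. h' i (x i)) = (\<lambda>x. \<Prod>i\<in>I. h i (x i))"
    by (auto simp: h'_def intro!: prod.cong)
  ultimately show ?thesis
    by simp
qed

lemma prob_space_mellin_dist:
  fixes f :: "real \<Rightarrow> real"
  assumes [measurable]: "f \<in> borel_measurable borel" and "\<And>x. 0 < x \<Longrightarrow> 0 \<le> f x"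
    and "mellin f a \<in> {0<..<\<infinity>}"
  shows "prob_space (mellin_dist f a)"
proof (rule prob_spaceI)
  define m where "m = enn2real (mellin f a)"
  have m: "0 < m" "mellin f a = ennreal m"
    using assms(3) by (auto simp: m_def enn2real_positive_iff ennreal_enn2real_if)
  have "0 \<le> indicator {0<..} x * (x powr (a - 1) * f x)" for x
    using assms(2) by (cases "0 < x") auto
  with m(1) have "emeasure (mellin_dist f a) (space (mellin_dist f a)) =
      (\<integral>\<^sup>+ x. ennreal (indicator {0<..} x * (x powr (a - 1) * f x)) / ennreal m \<partial>lborel)"
    unfolding mellin_dist_def m_def[symmetric]
    by (subst emeasure_density) (auto intro!: nn_integral_cong simp: divide_ennreal)
  also have "\<dots> = mellin f a / ennreal m"
    unfolding mellin_def by (rule nn_integral_divide) measurable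
  also have "\<dots> = 1"
    using m by (simp add: divide_ennreal)
  finally show "emeasure (mellin_dist f a) (space (mellin_dist f a)) = 1" .
qed

lemma mellin_dist_tilt:
  fixes f :: "real \<Rightarrow> real"
  assumes [measurable]: "f \<in> borel_measurable borel" and "\<And>x. 0 < x \<Longrightarrow> 0 \<le> f x"
    and "mellin f a \<in> {0<..<\<infinity>}" "mellin f b \<in> {0<..<\<infinity>}"
  shows "mellin_dist f b = density (mellin_dist f a)
     (\<lambda>x. ennreal (enn2real (mellin f a) / enn2real (mellin f b) * exp ((b - a) * ln x)))"
proof -
  define ma where "ma = enn2real (mellin f a)"
  define mb where "mb = enn2real (mellin f b)"
  have "0 < ma" "0 < mb"
    using assms(3,4) by (auto simp: ma_def mb_def enn2real_positive_iff)
  have "ennreal (indicator {0<..} x * (x powr (a - 1) * f x) / ma) * ennreal (ma / mb * exp ((b - a) * ln x))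
      = ennreal (indicator {0<..} x * (x powr (b - 1) * f x) / mb)" for x :: real
  proof (cases "0 < x")
    case True
    have "x powr (a - 1) * exp ((b - a) * ln x) = x powr (b - 1)"
      using True by (simp add: powr_def exp_add[symmetric] algebra_simps)
    then have "x powr (a - 1) * f x / ma * (ma / mb * exp ((b - a) * ln x)) = x powr (b - 1) * f x / mb"
      using \<open>0 < ma\<close> by (simp add: field_simps)
    then show ?thesis
      using True assms(2) \<open>0 < ma\<close> \<open>0 < mb\<close> by (simp flip: ennreal_mult)
  qed simp
  then show ?thesis
    unfolding mellin_dist_def ma_def[symmetric] mb_def[symmetric]
    by (subst density_density_eq) auto
qed

lemma sets_mellin_prod: "sets (mellin_prod r f a) = sets (PiM {1..r} (\<lambda>_. borel))"
  unfolding mellin_prod_def by (rule sets_PiM_cong) (auto simp: mellin_dist_def)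

context
  fixes r :: nat and f :: "nat \<Rightarrow> real \<Rightarrow> real"
  assumes f_measurable: "\<And>k. k \<in> {1..r} \<Longrightarrow> f k \<in> borel_measurable borel"
    and f_nonneg: "\<And>k x. k \<in> {1..r} \<Longrightarrow> 0 < x \<Longrightarrow> 0 \<le> f k x"
begin

lemma prob_space_mellin_prod:
  assumes "\<And>k. k \<in> {1..r} \<Longrightarrow> mellin (f k) a \<in> {0<..<\<infinity>}"
  shows "prob_space (mellin_prod r f a)"
  unfolding mellin_prod_def
  using assms f_measurable f_nonneg by (intro prob_space_PiM prob_space_mellin_dist) auto

lemma mellin_prod_tilt:
  assumes a: "\<And>k. k \<in> {1..r} \<Longrightarrow> mellin (f k) a \<in> {0<..<\<infinity>}"
    and b: "\<And>k. k \<in> {1..r} \<Longrightarrow> mellin (f k) b \<in> {0<..<\<infinity>}"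
  shows "mellin_prod r f b = density (mellin_prod r f a)
     (\<lambda>x. ennreal ((\<Prod>k\<in>{1..r}. enn2real (mellin (f k) a) / enn2real (mellin (f k) b))
        * exp ((b - a) * (\<Sum>k\<in>{1..r}. ln (x k)))))"
proof -
  define q where "q k = enn2real (mellin (f k) a) / enn2real (mellin (f k) b)" for k
  define h where "h k x = ennreal (q k * exp ((b - a) * ln x))" for k x
  have q: "0 < q k" if "k \<in> {1..r}" for k
    using a[OF that] b[OF that] by (auto simp: q_def enn2real_positive_iff)
  have tilt: "mellin_dist (f k) b = density (mellin_dist (f k) a) (h k)" if "k \<in> {1..r}" for k
    unfolding h_def q_def using that a b f_measurable f_nonneg by (intro mellin_dist_tilt) auto
  have h_measurable: "h k \<in> borel_measurable (mellin_dist (f k) a)" for k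
    unfolding h_def measurable_cong_sets[OF sets_density refl] mellin_dist_def by measurable
  have "mellin_prod r f b = PiM {1..r} (\<lambda>k. density (mellin_dist (f k) a) (h k))"
    unfolding mellin_prod_def using tilt by (rule PiM_cong[OF refl])
  also have "\<dots> = density (mellin_prod r f a) (\<lambda>x. \<Prod>k\<in>{1..r}. h k (x k))"
    unfolding mellin_prod_def using a b tilt[symmetric] h_measurable f_measurable f_nonneg
    by (intro PiM_density) (auto intro!: prob_space_mellin_dist)
  also have "(\<lambda>x. \<Prod>k\<in>{1..r}. h k (x k)) = (\<lambda>x. ennreal ((\<Prod>k\<in>{1..r}. q k)
      * exp ((b - a) * (\<Sum>k\<in>{1..r}. ln (x k)))))"
  proof
    fix x :: "nat \<Rightarrow> real"
    have "(\<Prod>k\<in>{1..r}. h k (x k)) = ennreal (\<Prod>k\<in>{1..r}. q k * exp ((b - a) * ln (x k)))"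
      unfolding h_def using q by (intro prod_ennreal) (auto intro: less_imp_le)
    then show "(\<Prod>k\<in>{1..r}. h k (x k)) = ennreal ((\<Prod>k\<in>{1..r}. q k)
        * exp ((b - a) * (\<Sum>k\<in>{1..r}. ln (x k))))"
      by (simp add: prod.distrib exp_sum sum_distrib_left)
  qed
  finally show ?thesis
    unfolding q_def .
qed

end

locale exponential_tilting =
  fixes N :: "'a measure" and S :: "'a \<Rightarrow> real" and a0 a1 :: real
    and q :: "real \<Rightarrow> real" and \<mu> :: "real \<Rightarrow> 'a measure"
  assumes a0_less_a1: "a0 < a1"
    and S_measurable [measurable]: "S \<in> borel_measurable N"
    and q_pos: "\<And>b. b \<in> {a0..a1} \<Longrightarrow> 0 < q b"
    and \<mu>_eq_density: "\<And>b. b \<in> {a0..a1} \<Longrightarrow> \<mu> b = density N (\<lambda>x. ennreal (q b * exp ((b - a0) * S x)))"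
    and prob_space_\<mu>: "\<And>b. b \<in> {a0..a1} \<Longrightarrow> prob_space (\<mu> b)"
begin

definition tilted_integral :: "('a \<Rightarrow> real) \<Rightarrow> real \<Rightarrow> real" where
  "tilted_integral g b = (\<integral>x. g x * exp ((b - a0) * S x) \<partial>N)"

lemma integrable_\<mu>_iff:
  assumes "b \<in> {a0..a1}" and [measurable]: "g \<in> borel_measurable N"
  shows "integrable (\<mu> b) g \<longleftrightarrow> integrable N (\<lambda>x. g x * exp ((b - a0) * S x))"
proof -
  have "integrable (\<mu> b) g \<longleftrightarrow> integrable N (\<lambda>x. q b * (g x * exp ((b - a0) * S x)))"
    unfolding \<mu>_eq_density[OF assms(1)] using q_pos[OF assms(1)]
    by (subst integrable_density) (auto simp: ac_simps)
  then show ?thesis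
    using q_pos[OF assms(1)] by simp
qed

lemma integral_\<mu>:
  assumes "b \<in> {a0..a1}" and [measurable]: "g \<in> borel_measurable N"
  shows "(\<integral>x. g x \<partial>\<mu> b) = q b * tilted_integral g b"
proof -
  have "(\<integral>x. g x \<partial>\<mu> b) = (\<integral>x. q b * (g x * exp ((b - a0) * S x)) \<partial>N)"
    unfolding \<mu>_eq_density[OF assms(1)] using q_pos[OF assms(1)]
    by (subst integral_density) (auto simp: ac_simps)
  then show ?thesis
    by (simp add: tilted_integral_def)
qed

lemma q_mult_tilted_integral_one:
  assumes "b \<in> {a0..a1}"
  shows "q b * tilted_integral (\<lambda>_. 1) b = 1"
  using integral_\<mu>[OF assms, of "\<lambda>_. 1"] prob_space.prob_space[OF prob_space_\<mu>[OF assms]] by simp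

lemma tilted_integral_one_pos:
  assumes "b \<in> {a0..a1}"
  shows "0 < tilted_integral (\<lambda>_. 1) b"
  using q_mult_tilted_integral_one[OF assms] q_pos[OF assms]
    mult_nonneg_nonpos[of "q b" "tilted_integral (\<lambda>_. 1) b"] by linarith

lemma integral_\<mu>_eq_ratio:
  assumes "b \<in> {a0..a1}" "g \<in> borel_measurable N"
  shows "(\<integral>x. g x \<partial>\<mu> b) = tilted_integral g b / tilted_integral (\<lambda>_. 1) b"
  using integral_\<mu>[OF assms] q_mult_tilted_integral_one[OF assms(1)] tilted_integral_one_pos[OF assms(1)]
  by (simp add: field_simps)

lemma integrable_abs_mult_exp_of_integrable_\<mu>:
  assumes "b \<in> {a0..a1}" "g \<in> borel_measurable N" "integrable (\<mu> b) g"
  shows "integrable N (\<lambda>x. \<bar>g x\<bar> * exp ((b - a0) * S x))"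
  using assms integrable_\<mu>_iff[of b "\<lambda>x. \<bar>g x\<bar>"] by auto

context
  fixes g :: "'a \<Rightarrow> real" and c d :: real
  assumes g_measurable [measurable]: "g \<in> borel_measurable N"
    and c: "c \<in> {a0..a1}" and d: "d \<in> {a0..a1}"
    and integrable_c: "integrable (\<mu> c) g" and integrable_d: "integrable (\<mu> d) g"
begin

lemma integrable_\<mu>_between:
  assumes "c \<le> b" "b \<le> d"
  shows "integrable (\<mu> b) g"
  using assms c d integrable_abs_mult_exp_of_integrable_\<mu>[OF c g_measurable integrable_c]
    integrable_abs_mult_exp_of_integrable_\<mu>[OF d g_measurable integrable_d]
  by (subst integrable_\<mu>_iff) (auto intro!: integrable_mult_exp_between[where M = N and w = g and S = S and a = "c - a0" and b = "d - a0"])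

lemma integrable_\<mu>_mult_S:
  assumes "c < b" "b < d"
  shows "integrable (\<mu> b) (\<lambda>x. g x * S x)"
proof -
  have "integrable N (\<lambda>x. \<bar>g x * S x\<bar> * exp ((b - a0) * S x))"
    using assms integrable_abs_mult_exp_of_integrable_\<mu>[OF c g_measurable integrable_c]
      integrable_abs_mult_exp_of_integrable_\<mu>[OF d g_measurable integrable_d]
    by (intro integrable_abs_mult_mult_exp[where M = N and w = g and S = S and a = "c - a0" and b = "d - a0"]) auto
  then have "integrable N (\<lambda>x. g x * S x * exp ((b - a0) * S x))"
    by (subst integrable_abs_iff[symmetric]) (auto simp: abs_mult)
  then show ?thesis
    using assms c d by (subst integrable_\<mu>_iff) auto
qed

lemma has_real_derivative_tilted_integral:
  assumes "c < b" "b < d"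
  shows "(tilted_integral g has_real_derivative tilted_integral (\<lambda>x. g x * S x) b) (at b)"
proof -
  have "((\<lambda>t. \<integral>x. g x * exp (t * S x) \<partial>N) has_real_derivative
      (\<integral>x. g x * S x * exp ((b - a0) * S x) \<partial>N)) (at (b - a0))"
    using assms integrable_abs_mult_exp_of_integrable_\<mu>[OF c g_measurable integrable_c]
      integrable_abs_mult_exp_of_integrable_\<mu>[OF d g_measurable integrable_d]
    by (intro has_real_derivative_integral_mult_exp[where M = N and w = g and S = S and a = "c - a0" and b = "d - a0"]) auto
  then show ?thesis
    using DERIV_shift[where z = "- a0"] by (simp add: tilted_integral_def[abs_def])
qed

end

lemma integrable_\<mu>_const: "b \<in> {a0..a1} \<Longrightarrow> integrable (\<mu> b) (\<lambda>_. 1)"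
  using prob_space_\<mu> by (simp add: prob_space_def finite_measure.integrable_const)

lemma has_real_derivative_integral_\<mu>:
  assumes [measurable]: "g \<in> borel_measurable N" and "c \<in> {a0..a1}" "d \<in> {a0..a1}"
    and "integrable (\<mu> c) g" "integrable (\<mu> d) g" and "c < b" "b < d"
  shows "((\<lambda>b. \<integral>x. g x \<partial>\<mu> b) has_real_derivative
           (\<integral>x. g x * S x \<partial>\<mu> b) - (\<integral>x. g x \<partial>\<mu> b) * (\<integral>x. S x \<partial>\<mu> b)) (at b)"
proof -
  have b: "b \<in> {a0..a1}"
    using assms by auto
  have "(tilted_integral g has_real_derivative tilted_integral (\<lambda>x. g x * S x) b) (at b)"
    using assms by (rule has_real_derivative_tilted_integral)
  moreover have "(tilted_integral (\<lambda>_. 1) has_real_derivative tilted_integral (\<lambda>x. 1 * S x) b) (at b)"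
    by (rule has_real_derivative_tilted_integral[OF borel_measurable_const assms(2,3)
          integrable_\<mu>_const[OF assms(2)] integrable_\<mu>_const[OF assms(3)] assms(6,7)])
  ultimately have "((\<lambda>b. tilted_integral g b / tilted_integral (\<lambda>_. 1) b) has_real_derivative
      (tilted_integral (\<lambda>x. g x * S x) b * tilted_integral (\<lambda>_. 1) b - tilted_integral g b * tilted_integral S b)
      / (tilted_integral (\<lambda>_. 1) b * tilted_integral (\<lambda>_. 1) b)) (at b)"
    using tilted_integral_one_pos[OF b] by (auto dest: DERIV_divide)
  also have "(tilted_integral (\<lambda>x. g x * S x) b * tilted_integral (\<lambda>_. 1) b - tilted_integral g b * tilted_integral S b)
      / (tilted_integral (\<lambda>_. 1) b * tilted_integral (\<lambda>_. 1) b)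
      = (\<integral>x. g x * S x \<partial>\<mu> b) - (\<integral>x. g x \<partial>\<mu> b) * (\<integral>x. S x \<partial>\<mu> b)"
    using tilted_integral_one_pos[OF b]
    unfolding integral_\<mu>_eq_ratio[OF b assms(1)] integral_\<mu>_eq_ratio[OF b S_measurable]
      integral_\<mu>_eq_ratio[OF b borel_measurable_times[OF assms(1) S_measurable]]
    by (simp add: field_simps)
  finally show ?thesis
  proof (rule has_field_derivative_transform_within_open)
    show "tilted_integral g t / tilted_integral (\<lambda>_. 1) t = (\<integral>x. g x \<partial>\<mu> t)" if "t \<in> {c<..<d}" for t
      using that assms by (subst integral_\<mu>_eq_ratio) auto
  qed (use assms in auto)
qed

lemma endpoints_mem: "a0 \<in> {a0..a1}" "a1 \<in> {a0..a1}"
  using a0_less_a1 by auto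

lemma integrable_\<mu>_S:
  assumes "a0 < b" "b < a1"
  shows "integrable (\<mu> b) S"
  using integrable_\<mu>_mult_S[OF borel_measurable_const endpoints_mem
      integrable_\<mu>_const[OF endpoints_mem(1)] integrable_\<mu>_const[OF endpoints_mem(2)] assms]
  by simp

lemma isCont_integral_\<mu>:
  fixes g :: "'a \<Rightarrow> real"
  assumes "g \<in> borel_measurable N" "c \<in> {a0..a1}" "d \<in> {a0..a1}"
    and "integrable (\<mu> c) g" "integrable (\<mu> d) g" "c < b" "b < d"
  shows "isCont (\<lambda>b. \<integral>x. g x \<partial>\<mu> b) b"
  using has_real_derivative_integral_\<mu>[OF assms] by (rule DERIV_isCont)

theorem has_real_derivative_expectation:
  assumes A: "A \<in> borel_measurable N" "integrable (\<mu> a0) A" "integrable (\<mu> a1) A"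
    and b: "b \<in> {a0<..<a1}"
  shows "((\<lambda>b. \<integral>x. A x \<partial>\<mu> b) has_real_derivative covariance (\<mu> b) A S) (at b)"
proof -
  have b': "b \<in> {a0..a1}" "a0 < b" "b < a1"
    using b by auto
  have "covariance (\<mu> b) A S = (\<integral>x. A x * S x \<partial>\<mu> b) - (\<integral>x. A x \<partial>\<mu> b) * (\<integral>x. S x \<partial>\<mu> b)"
  proof (rule prob_space.covariance_eq[OF prob_space_\<mu>[OF b'(1)]])
    show "integrable (\<mu> b) A"
      using integrable_\<mu>_between[OF A(1) endpoints_mem A(2,3)] b' by simp
    show "integrable (\<mu> b) (\<lambda>x. A x * S x)"
      using integrable_\<mu>_mult_S[OF A(1) endpoints_mem A(2,3) b'(2,3)] .
    show "integrable (\<mu> b) S"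
      using integrable_\<mu>_S[OF b'(2,3)] .
  qed
  then show ?thesis
    using has_real_derivative_integral_\<mu>[OF A(1) endpoints_mem A(2,3) b'(2,3)] by simp
qed

theorem continuous_on_deriv_expectation:
  assumes A: "A \<in> borel_measurable N" "integrable (\<mu> a0) A" "integrable (\<mu> a1) A"
  shows "continuous_on {a0<..<a1} (deriv (\<lambda>b. \<integral>x. A x \<partial>\<mu> b))"
proof -
  have deriv_eq: "deriv (\<lambda>b. \<integral>x. A x \<partial>\<mu> b) b
      = (\<integral>x. A x * S x \<partial>\<mu> b) - (\<integral>x. A x \<partial>\<mu> b) * (\<integral>x. S x \<partial>\<mu> b)"
    if "b \<in> {a0<..<a1}" for b
    using that by (intro DERIV_imp_deriv has_real_derivative_integral_\<mu>[OF A(1) endpoints_mem A(2,3)]) auto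
  have "isCont (\<lambda>b. (\<integral>x. A x * S x \<partial>\<mu> b) - (\<integral>x. A x \<partial>\<mu> b) * (\<integral>x. S x \<partial>\<mu> b)) b"
    if b: "b \<in> {a0<..<a1}" for b
  proof -
    \<comment> \<open>\<open>A * S\<close> and \<open>S\<close> are only known to be integrable strictly inside \<open>[a0, a1]\<close>.\<close>
    define c d where "c = (a0 + b) / 2" and "d = (b + a1) / 2"
    have cd: "c \<in> {a0..a1}" "d \<in> {a0..a1}" "c < b" "b < d" "a0 < c" "c < a1" "a0 < d" "d < a1"
      using b by (auto simp: c_def d_def)
    have AS_integrable: "integrable (\<mu> t) (\<lambda>x. A x * S x)" if "a0 < t" "t < a1" for t
      using integrable_\<mu>_mult_S[OF A(1) endpoints_mem A(2,3) that] .
    have "isCont (\<lambda>b. \<integral>x. A x \<partial>\<mu> b) b"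
      using b by (intro isCont_integral_\<mu>[OF A(1) endpoints_mem A(2,3)]) auto
    moreover have "isCont (\<lambda>b. \<integral>x. A x * S x \<partial>\<mu> b) b"
      using AS_integrable cd A(1)
      by (intro isCont_integral_\<mu>[OF _ cd(1,2) _ _ cd(3,4)]) auto
    moreover have "isCont (\<lambda>b. \<integral>x. S x \<partial>\<mu> b) b"
      using integrable_\<mu>_S cd by (intro isCont_integral_\<mu>[OF _ cd(1,2) _ _ cd(3,4)]) auto
    ultimately show ?thesis
      by (intro continuous_intros)
  qed
  then show ?thesis
    by (subst continuous_on_cong[OF refl deriv_eq]) (auto intro: continuous_at_imp_continuous_on)
qed

end

lemma exponential_tilting_mellin_prod:
  fixes f :: "nat \<Rightarrow> real \<Rightarrow> real"
  assumes f_measurable: "\<And>k. k \<in> {1..r} \<Longrightarrow> f k \<in> borel_measurable borel"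
    and f_nonneg: "\<And>k x. k \<in> {1..r} \<Longrightarrow> 0 < x \<Longrightarrow> 0 \<le> f k x"
    and "a0 < a1"
    and mellin_finite: "\<And>k b. k \<in> {1..r} \<Longrightarrow> b \<in> {a0..a1} \<Longrightarrow> mellin (f k) b \<in> {0<..<\<infinity>}"
  shows "exponential_tilting (mellin_prod r f a0) (\<lambda>x. \<Sum>k\<in>{1..r}. ln (x k)) a0 a1
    (\<lambda>b. \<Prod>k\<in>{1..r}. enn2real (mellin (f k) a0) / enn2real (mellin (f k) b)) (mellin_prod r f)"
proof (rule exponential_tilting.intro)
  show "(\<lambda>x. \<Sum>k\<in>{1..r}. ln (x k)) \<in> borel_measurable (mellin_prod r f a0)"
    unfolding measurable_cong_sets[OF sets_mellin_prod refl] by measurable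
  show "0 < (\<Prod>k\<in>{1..r}. enn2real (mellin (f k) a0) / enn2real (mellin (f k) b))"
    if "b \<in> {a0..a1}" for b
    using mellin_finite that \<open>a0 < a1\<close>
    by (intro prod_pos divide_pos_pos) (auto simp: enn2real_positive_iff)
  show "mellin_prod r f b = density (mellin_prod r f a0) (\<lambda>x. ennreal
      ((\<Prod>k\<in>{1..r}. enn2real (mellin (f k) a0) / enn2real (mellin (f k) b))
        * exp ((b - a0) * (\<Sum>k\<in>{1..r}. ln (x k)))))"
    if "b \<in> {a0..a1}" for b
    using mellin_finite that \<open>a0 < a1\<close> by (intro mellin_prod_tilt f_measurable f_nonneg) auto
  fix b assume "b \<in> {a0..a1}"
  then show "prob_space (mellin_prod r f b)"
    using mellin_finite by (intro prob_space_mellin_prod f_measurable f_nonneg) auto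
qed (rule \<open>a0 < a1\<close>)

theorem lemmaB2:
  fixes r :: nat and f :: "nat \<Rightarrow> real \<Rightarrow> real" and a0 a1 :: real
    and A :: "(nat \<Rightarrow> real) \<Rightarrow> real"
  assumes f_meas: "\<And>k. k \<in> {1..r} \<Longrightarrow> f k \<in> borel_measurable borel"
    and f_nonneg: "\<And>k x. k \<in> {1..r} \<Longrightarrow> 0 < x \<Longrightarrow> 0 \<le> f k x"
    and a_lt: "a0 < a1"
    and dom: "\<And>k. k \<in> {1..r} \<Longrightarrow> {a0..a1} \<subseteq> mellin_dom (f k)"
    and A_meas: "A \<in> borel_measurable (PiM {1..r} (\<lambda>_. borel))"
    and A_sq: "\<And>a. a \<in> {a0..a1} \<Longrightarrow> integrable (mellin_prod r f a) (\<lambda>x. (A x)\<^sup>2)"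
  shows "(\<forall>a \<in> {a0<..<a1}.
            ((\<lambda>b. \<integral>x. A x \<partial>mellin_prod r f b) has_real_derivative
               covariance (mellin_prod r f a) A (\<lambda>x. \<Sum>k\<in>{1..r}. ln (x k))) (at a))
       \<and> continuous_on {a0<..<a1} (deriv (\<lambda>b. \<integral>x. A x \<partial>mellin_prod r f b))"
proof -
  have mellin_finite: "mellin (f k) b \<in> {0<..<\<infinity>}" if "k \<in> {1..r}" "b \<in> {a0..a1}" for k b
    using dom[OF that(1)] that(2) interior_subset unfolding mellin_dom_def by fastforce
  interpret exponential_tilting "mellin_prod r f a0" "\<lambda>x. \<Sum>k\<in>{1..r}. ln (x k)" a0 a1
      "\<lambda>b. \<Prod>k\<in>{1..r}. enn2real (mellin (f k) a0) / enn2real (mellin (f k) b)" "mellin_prod r f"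
    using f_meas f_nonneg a_lt mellin_finite by (rule exponential_tilting_mellin_prod)
  have A_measurable: "A \<in> borel_measurable (mellin_prod r f b)" for b
    using A_meas unfolding measurable_cong_sets[OF sets_mellin_prod refl] .
  have A_integrable: "integrable (mellin_prod r f b) A" if "b \<in> {a0..a1}" for b
  proof (rule finite_measure.square_integrable_imp_integrable[OF _ A_measurable A_sq[OF that]])
    show "finite_measure (mellin_prod r f b)"
      using prob_space_\<mu>[OF that] by (rule prob_space.axioms)
  qed
  show ?thesis
    using has_real_derivative_expectation[OF A_measurable A_integrable[OF endpoints_mem(1)]
        A_integrable[OF endpoints_mem(2)]]
      continuous_on_deriv_expectation[OF A_measurable A_integrable[OF endpoints_mem(1)]
        A_integrable[OF endpoints_mem(2)]]
    by blast
qed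

end
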